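(* In the setting below (even case, with $T$ defined via normalizing matrices $\lambda_k$ homogeneous of degree $-1$ as described), for every $\mu\neq0$ and $\eta\in\mathbb C$, $$\det\big(Q_0(\mu)Q_1(\mu)\cdots Q_{N-1}(\mu)-\eta I_{nm}\big)$$ takes the same value at the coordinates $(a_k^i)$ and at their images $(T(a_k^i))$; i.e. $T$ preserves the spectral curve $\det(Q_0(\mu)\cdots Q_{N-1}(\mu)-\eta I_{nm})=0$.
   Context: Integers $n\ge1$, $s\ge2$, $m=2s$; $a_k^0,\dots,a_k^{m-1}$ are $n\times n$ matrices, $N$-periodic in $k$. $Q_k(\mu)$ is the $mn\times mn$ block matrix with $I_n$ in blocks $(i+1,i)$, last block column $(a_k^0;\mu a_k^1;a_k^2;\mu a_k^3;\dots;a_k^{2s-2};\mu a_k^{2s-1})$ and $O_n$ elsewhere; $Q_k=Q_k(1)$. $r_k=(O_n;a_k^1;O_n;\dots;O_n;a_k^{2s-1})$, $F^{(k)}_0=r_k$, $F^{(k)}_\ell=Q_k\cdots Q_{k+\ell-1}r_{k+\ell}$, $N_k=(F^{(k)}_0,\dots,F^{(k)}_{m-1})$, assumed invertible. $(\lambda_k)$ are $N$-periodic invertible $n\times n$ matrices whose entries are rational functions of the $a$'s homogeneous of degree $-1$ under the scaling $a^{2r+1}\mapsto\mu a^{2r+1}$, $a^{2r}\mapsto a^{2r}$; $\Lambda_k=\mathrm{diag}(\lambda_k,\dots,\lambda_{k+m-1})$. The map $T$ sends $a_k^i$ to the $i$-th $n\times n$ block (counting from $0$) of the last block column of $\Lambda_k^{-1}N_k^{-1}Q_kN_{k+1}\Lambda_{k+1}$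 (the Grassmannian pentagram map on the moduli space of twisted $N$-gons in $\mathrm{Gr}(n,2sn)$ written in these coordinates). *)

theory Defs
  imports "Jordan_Normal_Form.Gauss_Jordan_Elimination" "Jordan_Normal_Form.Determinant"
begin

text \<open>Coordinates: a k i is the n x n matrix a_k^i (k the vertex index, i = 0..m-1).
  All block matrices are mn x mn; row/column index p corresponds to block p div n,
  entry p mod n inside the block.\<close>

type_synonym coords = "nat \<Rightarrow> nat \<Rightarrow> complex mat"

definition minv :: "complex mat \<Rightarrow> complex mat" where
  "minv A = the (mat_inverse A)"

text \<open>Q_k(mu): identity blocks at (i+1,i), last block column
  (a_k^0; mu a_k^1; a_k^2; mu a_k^3; ...), zero elsewhere.\<close>
definition Qmat :: "nat \<Rightarrow> nat \<Rightarrow> coords \<Rightarrow> nat \<Rightarrow> complex \<Rightarrow> complex mat" where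
  "Qmat n m a k \<mu> = mat (m*n) (m*n) (\<lambda>(p,q).
     if q div n = m - 1 then (if odd (p div n) then \<mu> else 1) * (a k (p div n) $$ (p mod n, q mod n))
     else if p div n = q div n + 1 \<and> p mod n = q mod n then 1 else 0)"

fun Qprod :: "nat \<Rightarrow> nat \<Rightarrow> coords \<Rightarrow> nat \<Rightarrow> nat \<Rightarrow> complex \<Rightarrow> complex mat" where
  "Qprod n m a k 0 \<mu> = 1\<^sub>m (m*n)"
| "Qprod n m a k (Suc l) \<mu> = Qprod n m a k l \<mu> * Qmat n m a (k + l) \<mu>"

definition rvec :: "nat \<Rightarrow> nat \<Rightarrow> coords \<Rightarrow> nat \<Rightarrow> complex mat" where
  "rvec n m a k = mat (m*n) n (\<lambda>(p,q).
     if odd (p div n) then a k (p div n) $$ (p mod n, q) else 0)"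

definition Fvec :: "nat \<Rightarrow> nat \<Rightarrow> coords \<Rightarrow> nat \<Rightarrow> nat \<Rightarrow> complex mat" where
  "Fvec n m a k l = Qprod n m a k l 1 * rvec n m a (k + l)"

definition Nmat :: "nat \<Rightarrow> nat \<Rightarrow> coords \<Rightarrow> nat \<Rightarrow> complex mat" where
  "Nmat n m a k = mat (m*n) (m*n) (\<lambda>(p,q). Fvec n m a k (q div n) $$ (p, q mod n))"

definition Lmat :: "nat \<Rightarrow> nat \<Rightarrow> (nat \<Rightarrow> complex mat) \<Rightarrow> nat \<Rightarrow> complex mat" where
  "Lmat n m lam k = mat (m*n) (m*n) (\<lambda>(p,q).
     if p div n = q div n then lam (k + p div n) $$ (p mod n, q mod n) else 0)"

definition Tmap :: "nat \<Rightarrow> nat \<Rightarrow> (coords \<Rightarrow> nat \<Rightarrow> complex mat) \<Rightarrow> coords \<Rightarrow> coords" where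
  "Tmap n m lam a k i =
     (let M = minv (Lmat n m (lam a) k) * minv (Nmat n m a k) * Qmat n m a k 1
              * Nmat n m a (Suc k) * Lmat n m (lam a) (Suc k)
      in mat n n (\<lambda>(p,q). M $$ (i*n + p, (m - 1)*n + q)))"

definition scale_odd :: "complex \<Rightarrow> coords \<Rightarrow> coords" where
  "scale_odd \<mu> a k i = (if odd i then \<mu> \<cdot>\<^sub>m a k i else a k i)"

end

theory Submission
  imports Defs
begin

text \<open>
  Write \<open>P(\<mu>) = Q\<^sub>0(\<mu>) \<cdots> Q\<^sub>N\<^sub>-\<^sub>1(\<mu>)\<close>, and let \<open>F\<^sup>(\<^sup>k\<^sup>)\<^sub>l(\<mu>)\<close>, \<open>N\<^sub>k(\<mu>)\<close> be
  built like \<open>F\<^sup>(\<^sup>k\<^sup>)\<^sub>l\<close>, \<open>N\<^sub>k\<close> but from the matrices \<open>Q\<^sub>j(\<mu>)\<close>. Since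
  \<open>Q\<^sub>k(\<mu>) F\<^sup>(\<^sup>k\<^sup>+\<^sup>1\<^sup>)\<^sub>l(\<mu>) = F\<^sup>(\<^sup>k\<^sup>)\<^sub>l\<^sub>+\<^sub>1(\<mu>)\<close>, one has
  \<open>Q\<^sub>k(\<mu>) N\<^sub>k\<^sub>+\<^sub>1(\<mu>) = N\<^sub>k(\<mu>) C\<^sub>k(\<mu>)\<close> for the block companion matrix \<open>C\<^sub>k(\<mu>)\<close> whose
  last block column \<open>X\<^sub>k(\<mu>)\<close> solves \<open>N\<^sub>k(\<mu>) X = F\<^sup>(\<^sup>k\<^sup>)\<^sub>m(\<mu>)\<close>. Because \<open>m\<close> is even,
  the block columns of \<open>N\<^sub>k(\<mu>)\<close> and \<open>F\<^sup>(\<^sup>k\<^sup>)\<^sub>m(\<mu>)\<close> are combinations of the first block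
  columns of \<open>Q\<^sub>k(\<mu>) \<cdots> Q\<^sub>k\<^sub>+\<^sub>2\<^sub>c(\<mu>)\<close> with coefficients that do not depend on \<open>\<mu>\<close>, up to
  a factor \<open>\<mu>\<close> on the odd block columns; hence \<open>X\<^sub>k(\<mu>) = D(\<mu>) X\<^sub>k(1)\<close> with
  \<open>D(\<mu>) = diag(1, \<mu>, 1, \<mu>, \<dots>)\<close>. The definition of \<open>T\<close> says precisely that the matrices
  \<open>Q'\<^sub>k(\<mu>)\<close> of the image coordinates satisfy \<open>\<Lambda>\<^sub>k Q'\<^sub>k(\<mu>) = C\<^sub>k(\<mu>) \<Lambda>\<^sub>k\<^sub>+\<^sub>1\<close>.
  Multiplying over a period, \<open>P(\<mu>) N\<^sub>0(\<mu>) = N\<^sub>0(\<mu>) C(\<mu>)\<close> and \<open>\<Lambda>\<^sub>0 P'(\<mu>) = C(\<mu>) \<Lambda>\<^sub>0\<close>,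
  where \<open>P'(\<mu>) = Q'\<^sub>0(\<mu>) \<cdots> Q'\<^sub>N\<^sub>-\<^sub>1(\<mu>)\<close> and \<open>C(\<mu>) = C\<^sub>0(\<mu>) \<cdots> C\<^sub>N\<^sub>-\<^sub>1(\<mu>)\<close>, so the characteristic polynomials of \<open>P(\<mu>)\<close> and
  \<open>P'(\<mu>)\<close> agree wherever \<open>det N\<^sub>0(\<mu>) \<noteq> 0\<close>. As \<open>det N\<^sub>0(\<mu>)\<close> is a polynomial in \<open>\<mu>\<close>
  that does not vanish at \<open>\<mu> = 1\<close>, they agree for all \<open>\<mu>\<close>.
\<close>

lemma index_mult_mat_sum:
  assumes "A \<in> carrier_mat d e" "B \<in> carrier_mat e f" "i < d" "j < f"
  shows "(A * B) $$ (i,j) = (\<Sum>r<e. A $$ (i,r) * B $$ (r,j))"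
  using assms by (simp add: scalar_prod_def lessThan_atLeast0)

lemma sum_lessThan_mult_blocks: "(\<Sum>r<m*n. f r) = (\<Sum>i<m. \<Sum>w<n. f (i*n + w :: nat))"
proof -
  have "(\<Sum>r\<in>{i*n..<i*n+n}. f r) = (\<Sum>w<n. f (i*n + w))" for i
    using sum.shift_bounds_nat_ivl[of f 0 "i*n" n] by (simp add: lessThan_atLeast0 add.commute)
  then show ?thesis using sum.nat_group[of f n m] by simp
qed

lemma block_index_less: "i < m \<Longrightarrow> u < n \<Longrightarrow> i*n + u < m*(n::nat)"
proof -
  assume "i < m" "u < n"
  then have "i*n + u < Suc i * n" by simp
  also have "\<dots> \<le> m*n" using \<open>i < m\<close> by (intro mult_le_mono1) simp
  finally show ?thesis .
qed

lemma block_div_mod_eq_iff: "u < n \<Longrightarrow> (r div n = j \<and> r mod n = u) \<longleftrightarrow> r = j*n + (u::nat)"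
  by auto

lemma div_less_of_less_mult: "r < m*n \<Longrightarrow> r div n < (m::nat)"
  by (simp add: less_mult_imp_div_less)

lemma mod_less_of_less_mult: "r < m*n \<Longrightarrow> r mod n < (n::nat)"
  by (cases "n = 0") auto

lemma next_block_index_less:
  assumes q: "q < m*n" and "Suc (q div n) < m"
  shows "q + n < m*(n::nat)"
proof -
  have "q + n = Suc (q div n) * n + q mod n" using div_mult_mod_eq[of q n] by simp
  also have "\<dots> < m*n" using assms by (intro block_index_less) (auto intro: mod_less_of_less_mult)
  finally show ?thesis .
qed

lemma smult_one_mat[simp]: "(1::'a::monoid_mult) \<cdot>\<^sub>m A = A"
  by (rule eq_matI) auto

lemma invertible_mat_obtain_inverse:
  assumes A: "A \<in> carrier_mat d d" and "invertible_mat A"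
  obtains B where "B \<in> carrier_mat d d" "A * B = 1\<^sub>m d" "B * A = 1\<^sub>m d"
proof -
  obtain B where AB: "A * B = 1\<^sub>m (dim_row A)" "B * A = 1\<^sub>m (dim_row B)"
    using assms unfolding invertible_mat_def inverts_mat_def by blast
  have "dim_col B = d" using AB(1) A by (metis carrier_matD(1) index_mult_mat(3) index_one_mat(3))
  moreover have "dim_row B = d" using AB(2) A by (metis carrier_matD(2) index_mult_mat(3) index_one_mat(3))
  ultimately show ?thesis using that AB A by auto
qed

lemma invertible_mat_det_nonzero:
  fixes A :: "'a::comm_ring_1 mat"
  assumes A: "A \<in> carrier_mat d d" and "invertible_mat A"
  shows "det A \<noteq> 0"
proof -
  obtain B where B: "B \<in> carrier_mat d d" "A * B = 1\<^sub>m d"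
    using invertible_mat_obtain_inverse[OF assms] by blast
  have "det A * det B = 1" using det_mult[OF A B(1)] B(2) by simp
  then show ?thesis by auto
qed

lemma minv_inverse:
  assumes A: "A \<in> carrier_mat d d" and inv: "invertible_mat A"
  shows "A * minv A = 1\<^sub>m d" "minv A * A = 1\<^sub>m d" "minv A \<in> carrier_mat d d"
proof -
  obtain B where B: "B \<in> carrier_mat d d" "A * B = 1\<^sub>m d" "B * A = 1\<^sub>m d"
    using invertible_mat_obtain_inverse[OF assms] by blast
  then have "A \<in> Units (ring_mat TYPE(complex) d ())"
    using A unfolding Units_def by (auto simp: ring_mat_simps)
  then obtain C where C: "mat_inverse A = Some C"
    using mat_inverse(1)[OF A] by fastforce
  then show "A * minv A = 1\<^sub>m d" "minv A * A = 1\<^sub>m d" "minv A \<in> carrier_mat d d"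
    using mat_inverse(2)[OF A C] unfolding minv_def by auto
qed

lemma mult_left_inverse_cancel:
  fixes A B X :: "'a::semiring_1 mat"
  assumes "A \<in> carrier_mat d d" "B \<in> carrier_mat d d" "B * A = 1\<^sub>m d" "X \<in> carrier_mat d e"
  shows "B * (A * X) = X"
  using assoc_mult_mat[OF assms(2,1,4)] assms(3) left_mult_one_mat[OF assms(4)] by simp

lemma det_char_mat_intertwine:
  fixes A B X :: "'a::comm_ring_1 mat"
  assumes A: "A \<in> carrier_mat d d" and B: "B \<in> carrier_mat d d" and X: "X \<in> carrier_mat d d"
    and AX: "A * X = X * B"
  shows "det (A - c \<cdot>\<^sub>m 1\<^sub>m d) * det X = det X * det (B - c \<cdot>\<^sub>m 1\<^sub>m d)"
proof -
  have cI: "c \<cdot>\<^sub>m 1\<^sub>m d \<in> carrier_mat d d" by simp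
  have "(A - c \<cdot>\<^sub>m 1\<^sub>m d) * X = A * X - c \<cdot>\<^sub>m X"
    using minus_mult_distrib_mat[OF A cI X] mult_smult_assoc_mat[OF one_carrier_mat X] X by simp
  also have "\<dots> = X * (B - c \<cdot>\<^sub>m 1\<^sub>m d)"
    using mult_minus_distrib_mat[OF X B cI] mult_smult_distrib[OF X one_carrier_mat] X AX by simp
  finally show ?thesis
    using det_mult[OF minus_carrier_mat[OF cI] X] det_mult[OF X minus_carrier_mat[OF cI]] by metis
qed

section \<open>Block columns, companion and block-diagonal matrices\<close>

definition block_cols :: "nat \<Rightarrow> nat \<Rightarrow> nat \<Rightarrow> (nat \<Rightarrow> 'a mat) \<Rightarrow> 'a mat" where
  "block_cols d m n B = mat d (m*n) (\<lambda>(p,q). B (q div n) $$ (p, q mod n))"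

lemma block_cols_carrier[simp]: "block_cols d m n B \<in> carrier_mat d (m*n)"
  and dim_block_cols[simp]: "dim_row (block_cols d m n B) = d" "dim_col (block_cols d m n B) = m*n"
  and index_block_cols[simp]:
    "p < d \<Longrightarrow> q < m*n \<Longrightarrow> block_cols d m n B $$ (p,q) = B (q div n) $$ (p, q mod n)"
  by (simp_all add: block_cols_def)

lemma block_cols_cong: "(\<And>l. l < m \<Longrightarrow> B l = B' l) \<Longrightarrow> block_cols d m n B = block_cols d m n B'"
  unfolding block_cols_def by (intro cong_mat refl) (auto dest: div_less_of_less_mult)

lemma mult_block_cols:
  assumes A: "A \<in> carrier_mat d' d" and B: "\<And>l. l < m \<Longrightarrow> B l \<in> carrier_mat d n"
  shows "A * block_cols d m n B = block_cols d' m n (\<lambda>l. A * B l)"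
proof (rule eq_matI)
  fix p q assume "p < dim_row (block_cols d' m n (\<lambda>l. A * B l))"
    "q < dim_col (block_cols d' m n (\<lambda>l. A * B l))"
  then have p: "p < d'" and q: "q < m*n" by auto
  have Bl: "B (q div n) \<in> carrier_mat d n" and u: "q mod n < n"
    using B div_less_of_less_mult[OF q] mod_less_of_less_mult[OF q] by auto
  have "(A * block_cols d m n B) $$ (p,q) = (\<Sum>r<d. A $$ (p,r) * B (q div n) $$ (r, q mod n))"
    using q by (auto simp: index_mult_mat_sum[OF A block_cols_carrier p q] intro!: sum.cong)
  also have "\<dots> = (A * B (q div n)) $$ (p, q mod n)"
    by (rule index_mult_mat_sum[OF A Bl p u, symmetric])
  finally show "(A * block_cols d m n B) $$ (p,q) = block_cols d' m n (\<lambda>l. A * B l) $$ (p,q)"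
    using p q by simp
qed (use A in auto)

definition companion :: "nat \<Rightarrow> nat \<Rightarrow> 'a::{zero,one} mat \<Rightarrow> 'a mat" where
  "companion m n X = mat (m*n) (m*n) (\<lambda>(p,q). if q div n = m - 1 then X $$ (p, q mod n)
     else if p div n = q div n + 1 \<and> p mod n = q mod n then 1 else 0)"

lemma companion_carrier[simp]: "companion m n X \<in> carrier_mat (m*n) (m*n)"
  and dim_companion[simp]: "dim_row (companion m n X) = m*n" "dim_col (companion m n X) = m*n"
  by (simp_all add: companion_def)

lemma companion_index:
  assumes "r < m*n" "q < m*n"
  shows "companion m n X $$ (r,q)
       = (if q div n = m - 1 then X $$ (r, q mod n) else if r = q + n then 1 else 0)"
proof -
  have "(r div n = q div n + 1 \<and> r mod n = q mod n) \<longleftrightarrow> r = q + n"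
    using block_div_mod_eq_iff[OF mod_less_of_less_mult[OF assms(2)], of r "q div n + 1"]
      div_mult_mod_eq[of q n] by (auto simp: algebra_simps)
  then show ?thesis using assms by (simp add: companion_def)
qed

lemma mult_companion_index:
  fixes A :: "'a::comm_ring_1 mat"
  assumes A: "A \<in> carrier_mat d (m*n)" and X: "X \<in> carrier_mat (m*n) n"
    and p: "p < d" and q: "q < m*n"
  shows "(A * companion m n X) $$ (p,q)
       = (if q div n = m - 1 then (A * X) $$ (p, q mod n) else A $$ (p, q + n))"
proof (cases "q div n = m - 1")
  case True
  then show ?thesis
    using q by (auto simp: index_mult_mat_sum[OF A companion_carrier p q] companion_index
        index_mult_mat_sum[OF A X p mod_less_of_less_mult[OF q]] intro!: sum.cong)
next
  case False
  then have "q + n < m*n"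
    using div_less_of_less_mult[OF q] by (intro next_block_index_less[OF q]) linarith
  then show ?thesis
    using False q by (auto simp: index_mult_mat_sum[OF A companion_carrier p q] companion_index
        if_distrib[of "\<lambda>x. A $$ (p, _) * x"] cong: if_cong)
qed

lemma block_cols_mult_companion:
  fixes B :: "nat \<Rightarrow> 'a::comm_ring_1 mat"
  assumes B: "\<And>l. l < m \<Longrightarrow> B l \<in> carrier_mat d n" and X: "X \<in> carrier_mat (m*n) n"
  shows "block_cols d m n B * companion m n X
       = block_cols d m n (\<lambda>l. if Suc l < m then B (Suc l) else block_cols d m n B * X)"
proof (rule eq_matI)
  fix p q assume "p < dim_row (block_cols d m n (\<lambda>l. if Suc l < m then B (Suc l) else block_cols d m n B * X))"
    "q < dim_col (block_cols d m n (\<lambda>l. if Suc l < m then B (Suc l) else block_cols d m n B * X))"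
  then have p: "p < d" and q: "q < m*n" by auto
  have n: "0 < n" using q by (cases n) auto
  have "q div n < m" using div_less_of_less_mult[OF q] .
  have "q + n < m*n" if "Suc (q div n) < m" by (rule next_block_index_less[OF q that])
  then show "(block_cols d m n B * companion m n X) $$ (p,q)
      = block_cols d m n (\<lambda>l. if Suc l < m then B (Suc l) else block_cols d m n B * X) $$ (p,q)"
    using p q n \<open>q div n < m\<close> by (auto simp: mult_companion_index[OF block_cols_carrier X p q])
qed auto

definition scale_row_blocks :: "nat \<Rightarrow> (nat \<Rightarrow> 'a) \<Rightarrow> 'a::times mat \<Rightarrow> 'a mat" where
  "scale_row_blocks n c Y = mat (dim_row Y) (dim_col Y) (\<lambda>(p,u). c (p div n) * Y $$ (p,u))"

lemma scale_row_blocks_carrier[simp]: "Y \<in> carrier_mat d e \<Longrightarrow> scale_row_blocks n c Y \<in> carrier_mat d e"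
  and dim_scale_row_blocks[simp]:
    "dim_row (scale_row_blocks n c Y) = dim_row Y" "dim_col (scale_row_blocks n c Y) = dim_col Y"
  and index_scale_row_blocks[simp]:
    "p < dim_row Y \<Longrightarrow> u < dim_col Y \<Longrightarrow> scale_row_blocks n c Y $$ (p,u) = c (p div n) * Y $$ (p,u)"
  by (auto simp: scale_row_blocks_def)

lemma scale_row_blocks_ones: "(\<And>i. c i = 1) \<Longrightarrow> scale_row_blocks n c Y = (Y :: 'a::monoid_mult mat)"
  by (rule eq_matI) auto

lemma scale_row_blocks_mult:
  fixes Y :: "'a::comm_ring_1 mat"
  assumes "Y \<in> carrier_mat d e" "B \<in> carrier_mat e f"
  shows "scale_row_blocks n c Y * B = scale_row_blocks n c (Y * B)"
  by (rule eq_matI) (use assms in \<open>auto simp: scalar_prod_def sum_distrib_left mult.assoc\<close>)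

lemma block_cols_mult_scale_row_blocks:
  fixes B :: "nat \<Rightarrow> 'a::comm_ring_1 mat"
  assumes B: "\<And>l. l < m \<Longrightarrow> B l \<in> carrier_mat d n" and Y: "Y \<in> carrier_mat (m*n) e"
  shows "block_cols d m n B * scale_row_blocks n c Y = block_cols d m n (\<lambda>l. c l \<cdot>\<^sub>m B l) * Y"
proof (rule eq_matI)
  fix p u assume "p < dim_row (block_cols d m n (\<lambda>l. c l \<cdot>\<^sub>m B l) * Y)"
    "u < dim_col (block_cols d m n (\<lambda>l. c l \<cdot>\<^sub>m B l) * Y)"
  then have p: "p < d" and u: "u < e" using Y by auto
  have "block_cols d m n B $$ (p,r) * scale_row_blocks n c Y $$ (r,u)
      = block_cols d m n (\<lambda>l. c l \<cdot>\<^sub>m B l) $$ (p,r) * Y $$ (r,u)" if r: "r < m*n" for r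
    using B[OF div_less_of_less_mult[OF r]] mod_less_of_less_mult[OF r] p r u Y by auto
  then show "(block_cols d m n B * scale_row_blocks n c Y) $$ (p,u)
      = (block_cols d m n (\<lambda>l. c l \<cdot>\<^sub>m B l) * Y) $$ (p,u)"
    by (simp add: index_mult_mat_sum[OF block_cols_carrier scale_row_blocks_carrier[OF Y] p u]
        index_mult_mat_sum[OF block_cols_carrier Y p u])
qed (use Y in auto)

definition last_block_col :: "nat \<Rightarrow> nat \<Rightarrow> 'a mat \<Rightarrow> 'a mat" where
  "last_block_col m n M = mat (m*n) n (\<lambda>(p,u). M $$ (p, (m-1)*n + u))"

lemma last_block_col_carrier[simp]: "last_block_col m n M \<in> carrier_mat (m*n) n"
  and dim_last_block_col[simp]: "dim_row (last_block_col m n M) = m*n" "dim_col (last_block_col m n M) = n"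
  by (simp_all add: last_block_col_def)

lemma last_block_col_mult:
  fixes A :: "'a::comm_ring_1 mat"
  assumes A: "A \<in> carrier_mat (m*n) (m*n)" and B: "B \<in> carrier_mat (m*n) (m*n)" and m: "0 < m"
  shows "last_block_col m n (A * B) = A * last_block_col m n B"
proof (rule eq_matI)
  fix p u assume "p < dim_row (A * last_block_col m n B)" "u < dim_col (A * last_block_col m n B)"
  then have p: "p < m*n" and u: "u < n" using A by auto
  have lt: "(m-1)*n + u < m*n" using m u by (auto intro: block_index_less)
  have "last_block_col m n (A * B) $$ (p,u) = (\<Sum>r<m*n. A $$ (p,r) * B $$ (r, (m-1)*n + u))"
    using p u index_mult_mat_sum[OF A B p lt] by (simp add: last_block_col_def)
  also have "\<dots> = (\<Sum>r<m*n. A $$ (p,r) * last_block_col m n B $$ (r,u))"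
    using u by (auto simp: last_block_col_def intro!: sum.cong)
  also have "\<dots> = (A * last_block_col m n B) $$ (p,u)"
    by (rule index_mult_mat_sum[OF A last_block_col_carrier p u, symmetric])
  finally show "last_block_col m n (A * B) $$ (p,u) = (A * last_block_col m n B) $$ (p,u)" .
qed (use A in \<open>auto simp: last_block_col_def\<close>)

lemma Lmat_carrier[simp]: "Lmat n m L k \<in> carrier_mat (m*n) (m*n)"
  and dim_Lmat[simp]: "dim_row (Lmat n m L k) = m*n" "dim_col (Lmat n m L k) = m*n"
  by (simp_all add: Lmat_def)

lemma Lmat_index: "p < m*n \<Longrightarrow> q < m*n \<Longrightarrow> Lmat n m L k $$ (p,q)
   = (if p div n = q div n then L (k + p div n) $$ (p mod n, q mod n) else 0)"
  by (simp add: Lmat_def)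

lemma Lmat_mult_index:
  assumes X: "X \<in> carrier_mat (m*n) e" and p: "p < m*n" and q: "q < e"
  shows "(Lmat n m L k * X) $$ (p,q) = (\<Sum>t<n. L (k + p div n) $$ (p mod n, t) * X $$ (p div n * n + t, q))"
proof -
  have i: "p div n < m" using div_less_of_less_mult[OF p] .
  have "(Lmat n m L k * X) $$ (p,q) = (\<Sum>j<m. \<Sum>w<n. Lmat n m L k $$ (p, j*n + w) * X $$ (j*n + w, q))"
    by (simp add: index_mult_mat_sum[OF Lmat_carrier X p q] sum_lessThan_mult_blocks)
  also have "\<dots> = (\<Sum>j<m. if j = p div n then (\<Sum>w<n. L (k + p div n) $$ (p mod n, w) * X $$ (j*n + w, q)) else 0)"
  proof (rule sum.cong[OF refl])
    fix j assume j: "j \<in> {..<m}"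
    have "(\<Sum>w<n. Lmat n m L k $$ (p, j*n + w) * X $$ (j*n + w, q))
        = (\<Sum>w<n. (if j = p div n then L (k + p div n) $$ (p mod n, w) else 0) * X $$ (j*n + w, q))"
      using j by (intro sum.cong refl) (auto simp: Lmat_index p block_index_less)
    then show "(\<Sum>w<n. Lmat n m L k $$ (p, j*n + w) * X $$ (j*n + w, q))
        = (if j = p div n then (\<Sum>w<n. L (k + p div n) $$ (p mod n, w) * X $$ (j*n + w, q)) else 0)"
      by (cases "j = p div n") simp_all
  qed
  also have "\<dots> = (\<Sum>t<n. L (k + p div n) $$ (p mod n, t) * X $$ (p div n * n + t, q))"
    using i by simp
  finally show ?thesis .
qed

lemma mult_Lmat_index:
  assumes X: "X \<in> carrier_mat e (m*n)" and p: "p < e" and q: "q < m*n"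
  shows "(X * Lmat n m L k) $$ (p,q) = (\<Sum>t<n. X $$ (p, q div n * n + t) * L (k + q div n) $$ (t, q mod n))"
proof -
  have i: "q div n < m" using div_less_of_less_mult[OF q] .
  have "(X * Lmat n m L k) $$ (p,q) = (\<Sum>j<m. \<Sum>w<n. X $$ (p, j*n + w) * Lmat n m L k $$ (j*n + w, q))"
    by (simp add: index_mult_mat_sum[OF X Lmat_carrier p q] sum_lessThan_mult_blocks)
  also have "\<dots> = (\<Sum>j<m. if j = q div n then (\<Sum>w<n. X $$ (p, j*n + w) * L (k + q div n) $$ (w, q mod n)) else 0)"
  proof (rule sum.cong[OF refl])
    fix j assume j: "j \<in> {..<m}"
    have "(\<Sum>w<n. X $$ (p, j*n + w) * Lmat n m L k $$ (j*n + w, q))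
        = (\<Sum>w<n. X $$ (p, j*n + w) * (if j = q div n then L (k + q div n) $$ (w, q mod n) else 0))"
      using j by (intro sum.cong refl) (auto simp: Lmat_index q block_index_less)
    then show "(\<Sum>w<n. X $$ (p, j*n + w) * Lmat n m L k $$ (j*n + w, q))
        = (if j = q div n then (\<Sum>w<n. X $$ (p, j*n + w) * L (k + q div n) $$ (w, q mod n)) else 0)"
      by (cases "j = q div n") simp_all
  qed
  also have "\<dots> = (\<Sum>t<n. X $$ (p, q div n * n + t) * L (k + q div n) $$ (t, q mod n))"
    using i by simp
  finally show ?thesis .
qed

lemma Lmat_mult_Lmat:
  assumes L: "\<And>j. L j \<in> carrier_mat n n" and L': "\<And>j. L' j \<in> carrier_mat n n"
  shows "Lmat n m L k * Lmat n m L' k = Lmat n m (\<lambda>j. L j * L' j) k"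
proof (rule eq_matI)
  fix p q assume "p < dim_row (Lmat n m (\<lambda>j. L j * L' j) k)" "q < dim_col (Lmat n m (\<lambda>j. L j * L' j) k)"
  then have p: "p < m*n" and q: "q < m*n" by auto
  have pm: "p mod n < n" and qm: "q mod n < n"
    using mod_less_of_less_mult[OF p] mod_less_of_less_mult[OF q] by auto
  have lt: "p div n * n + t < m*n" if "t < n" for t
    using block_index_less[OF div_less_of_less_mult[OF p] that] .
  have "(Lmat n m L k * Lmat n m L' k) $$ (p,q)
      = (\<Sum>t<n. if p div n = q div n then L (k + p div n) $$ (p mod n, t) * L' (k + p div n) $$ (t, q mod n) else 0)"
    using lt by (auto simp: Lmat_mult_index[OF Lmat_carrier p q] Lmat_index[OF _ q] intro!: sum.cong)
  also have "\<dots> = Lmat n m (\<lambda>j. L j * L' j) k $$ (p,q)"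
    using index_mult_mat_sum[OF L L' pm qm] by (simp add: Lmat_index[OF p q])
  finally show "(Lmat n m L k * Lmat n m L' k) $$ (p,q) = Lmat n m (\<lambda>j. L j * L' j) k $$ (p,q)" .
qed auto

lemma Lmat_one: "Lmat n m (\<lambda>j. 1\<^sub>m n) k = 1\<^sub>m (m*n)"
proof (rule eq_matI)
  fix p q assume "p < dim_row (1\<^sub>m (m*n))" "q < dim_col (1\<^sub>m (m*n) :: complex mat)"
  then have p: "p < m*n" and q: "q < m*n" by auto
  have "(p = q) = (p div n = q div n \<and> p mod n = q mod n)" by (metis div_mult_mod_eq)
  then show "Lmat n m (\<lambda>j. 1\<^sub>m n) k $$ (p,q) = (1\<^sub>m (m*n) :: complex mat) $$ (p,q)"
    using p q mod_less_of_less_mult[OF p] mod_less_of_less_mult[OF q] by (auto simp: Lmat_index)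
qed auto

lemma Lmat_invertible:
  assumes L: "\<And>j. L j \<in> carrier_mat n n" and Li: "\<And>j. invertible_mat (L j)"
  shows "invertible_mat (Lmat n m L k)"
proof -
  have M: "\<And>j. minv (L j) \<in> carrier_mat n n" using minv_inverse(3)[OF L Li] .
  have "Lmat n m L k * Lmat n m (\<lambda>j. minv (L j)) k = 1\<^sub>m (m*n)"
    "Lmat n m (\<lambda>j. minv (L j)) k * Lmat n m L k = 1\<^sub>m (m*n)"
    by (simp_all add: Lmat_mult_Lmat[OF L M] Lmat_mult_Lmat[OF M L] minv_inverse[OF L Li] Lmat_one)
  then show ?thesis unfolding invertible_mat_def inverts_mat_def by auto
qed

lemma Lmat_mult_scale_row_blocks:
  assumes Y: "Y \<in> carrier_mat (m*n) e"
  shows "Lmat n m L k * scale_row_blocks n c Y = scale_row_blocks n c (Lmat n m L k * Y)"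
proof (rule eq_matI)
  fix p u assume "p < dim_row (scale_row_blocks n c (Lmat n m L k * Y))"
    "u < dim_col (scale_row_blocks n c (Lmat n m L k * Y))"
  then have p: "p < m*n" and u: "u < e" using Y by auto
  have lt: "p div n * n + t < m*n" if "t < n" for t
    using block_index_less[OF div_less_of_less_mult[OF p] that] .
  have "(Lmat n m L k * scale_row_blocks n c Y) $$ (p,u)
      = (\<Sum>t<n. L (k + p div n) $$ (p mod n, t) * (c (p div n) * Y $$ (p div n * n + t, u)))"
    using Y u lt by (auto simp: Lmat_mult_index[OF _ p u] intro!: sum.cong)
  also have "\<dots> = c (p div n) * (Lmat n m L k * Y) $$ (p,u)"
    by (simp add: Lmat_mult_index[OF Y p u] sum_distrib_left mult.left_commute)
  finally show "(Lmat n m L k * scale_row_blocks n c Y) $$ (p,u) = scale_row_blocks n c (Lmat n m L k * Y) $$ (p,u)"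
    using p u Y by simp
qed (use Y in auto)

text \<open>Only the last block column needs a hypothesis: on the identity blocks, \<open>\<Lambda>\<^sub>k\<close> and
  \<open>\<Lambda>\<^sub>k\<^sub>+\<^sub>1\<close> agree up to a shift by one block.\<close>

lemma Lmat_mult_companion:
  assumes m: "0 < m" and Y: "Y \<in> carrier_mat (m*n) n" and Y': "Y' \<in> carrier_mat (m*n) n"
    and L: "\<And>j. L j \<in> carrier_mat n n" and LY: "Lmat n m L k * Y = Y' * L (k + m)"
  shows "Lmat n m L k * companion m n Y = companion m n Y' * Lmat n m L (Suc k)"
proof (rule eq_matI)
  fix p q assume "p < dim_row (companion m n Y' * Lmat n m L (Suc k))"
    "q < dim_col (companion m n Y' * Lmat n m L (Suc k))"
  then have p: "p < m*n" and q: "q < m*n" by auto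
  define j where "j = q div n"
  have j: "j < m" and qm: "q mod n < n" and pm: "p mod n < n"
    using div_less_of_less_mult[OF q] mod_less_of_less_mult[OF q] mod_less_of_less_mult[OF p]
    by (auto simp: j_def)
  have lt: "j*n + t < m*n" if "t < n" for t using block_index_less[OF j that] .
  have RHS: "(companion m n Y' * Lmat n m L (Suc k)) $$ (p,q)
      = (\<Sum>t<n. companion m n Y' $$ (p, j*n + t) * L (Suc k + j) $$ (t, q mod n))"
    unfolding j_def by (rule mult_Lmat_index[OF companion_carrier p q])
  show "(Lmat n m L k * companion m n Y) $$ (p,q) = (companion m n Y' * Lmat n m L (Suc k)) $$ (p,q)"
  proof (cases "j = m - 1")
    case True
    then have "Suc k + j = k + m" using m by simp
    then show ?thesis
      using True lt p q qm unfolding RHS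
      by (simp add: mult_companion_index[OF Lmat_carrier Y p q] j_def LY companion_index
          index_mult_mat_sum[OF Y' L p qm])
  next
    case False
    have "companion m n Y' $$ (p, j*n + t) = (if t = p mod n \<and> p div n = Suc j then 1 else 0)"
      if "t < n" for t
      using False that lt[OF that] p block_div_mod_eq_iff[OF that, of p "Suc j"]
      by (auto simp: companion_index algebra_simps)
    then have "(companion m n Y' * Lmat n m L (Suc k)) $$ (p,q)
        = (if p div n = Suc j then L (Suc k + j) $$ (p mod n, q mod n) else 0)"
      unfolding RHS using pm by (simp add: if_distrib[of "\<lambda>x. x * _"] cong: if_cong)
    moreover have "0 < n" using q by (cases n) auto
    then have "q + n < m*n" "(q + n) div n = Suc j" "(q + n) mod n = q mod n"
      using False j q next_block_index_less[OF q] by (auto simp: j_def)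
    ultimately show ?thesis
      using False p q by (simp add: mult_companion_index[OF Lmat_carrier Y p q] j_def Lmat_index)
  qed
qed auto

lemma last_block_col_companion_mult_Lmat:
  assumes m: "0 < m" and X: "X \<in> carrier_mat (m*n) n" and L: "\<And>j. L j \<in> carrier_mat n n"
  shows "last_block_col m n (companion m n X * Lmat n m L k) = X * L (k + m - 1)"
proof (rule eq_matI)
  fix p u assume "p < dim_row (X * L (k + m - 1))" "u < dim_col (X * L (k + m - 1))"
  then have p: "p < m*n" and u: "u < n" using X L[of "k + m - 1"] by auto
  have lt: "(m-1)*n + t < m*n" if "t < n" for t using m that by (intro block_index_less) auto
  have "last_block_col m n (companion m n X * Lmat n m L k) $$ (p,u)
      = (companion m n X * Lmat n m L k) $$ (p, (m-1)*n + u)"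
    using p u by (simp add: last_block_col_def)
  also have "\<dots> = (\<Sum>t<n. companion m n X $$ (p, (m-1)*n + t) * L (k + (m-1)) $$ (t, u))"
    using u mult_Lmat_index[OF companion_carrier p lt[OF u]] by simp
  also have "\<dots> = (X * L (k + m - 1)) $$ (p,u)"
    using m p lt by (auto simp: index_mult_mat_sum[OF X L p u] companion_index intro!: sum.cong)
  finally show "last_block_col m n (companion m n X * Lmat n m L k) $$ (p,u) = (X * L (k + m - 1)) $$ (p,u)" .
qed (use X L[of "k + m - 1"] in auto)

section \<open>Polynomial functions\<close>

definition polyfun :: "('a::comm_semiring_0 \<Rightarrow> 'a) \<Rightarrow> bool" where
  "polyfun f \<longleftrightarrow> (\<exists>p. \<forall>x. f x = poly p x)"

lemma polyfun_const[intro]: "polyfun (\<lambda>x. c)"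
  unfolding polyfun_def by (rule exI[of _ "[:c:]"]) simp

lemma polyfun_ident[intro]: "polyfun (\<lambda>x::'a::comm_semiring_1. x)"
  unfolding polyfun_def by (rule exI[of _ "[:0, 1:]"]) simp

lemma polyfun_add[intro]: "polyfun f \<Longrightarrow> polyfun g \<Longrightarrow> polyfun (\<lambda>x. f x + g x)"
  unfolding polyfun_def by (metis poly_add)

lemma polyfun_diff[intro]:
  fixes f g :: "'a::comm_ring \<Rightarrow> 'a"
  shows "polyfun f \<Longrightarrow> polyfun g \<Longrightarrow> polyfun (\<lambda>x. f x - g x)"
  unfolding polyfun_def by (metis poly_diff)

lemma polyfun_mult[intro]: "polyfun f \<Longrightarrow> polyfun g \<Longrightarrow> polyfun (\<lambda>x. f x * g x)"
  unfolding polyfun_def by (metis poly_mult)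

lemma polyfun_if[intro]: "polyfun f \<Longrightarrow> polyfun g \<Longrightarrow> polyfun (\<lambda>x. if P then f x else g x)"
  by (cases P) auto

lemma polyfun_sum:
  "(\<And>i. i \<in> S \<Longrightarrow> polyfun (f i)) \<Longrightarrow> polyfun (\<lambda>x. \<Sum>i\<in>S. f i x)"
proof (induction S rule: infinite_finite_induct)
  case (insert i S)
  then show ?case using polyfun_add[of "f i" "\<lambda>x. \<Sum>i\<in>S. f i x"] by simp
qed auto

lemma polyfun_prod:
  fixes f :: "'b \<Rightarrow> 'a::comm_semiring_1 \<Rightarrow> 'a"
  shows "(\<And>i. i \<in> S \<Longrightarrow> polyfun (f i)) \<Longrightarrow> polyfun (\<lambda>x. \<Prod>i\<in>S. f i x)"
proof (induction S rule: infinite_finite_induct)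
  case (insert i S)
  then show ?case using polyfun_mult[of "f i" "\<lambda>x. \<Prod>i\<in>S. f i x"] by simp
qed auto

lemma polyfun_det:
  fixes A :: "'a::comm_ring_1 \<Rightarrow> 'a mat"
  assumes A: "\<And>x. A x \<in> carrier_mat d d"
    and entries: "\<And>i j. i < d \<Longrightarrow> j < d \<Longrightarrow> polyfun (\<lambda>x. A x $$ (i,j))"
  shows "polyfun (\<lambda>x. det (A x))"
proof -
  have "polyfun (\<lambda>x. \<Sum>p\<in>{p. p permutes {0..<d}}. signof p * (\<Prod>i=0..<d. A x $$ (i, p i)))"
  proof (intro polyfun_sum polyfun_mult polyfun_const polyfun_prod)
    fix p i assume "p \<in> {p. p permutes {0..<d}}" "i \<in> {0..<d}"
    then show "polyfun (\<lambda>x. A x $$ (i, p i))" using entries permutes_in_image[of p "{0..<d}" i] by simp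
  qed
  moreover have "det (A x) = (\<Sum>p\<in>{p. p permutes {0..<d}}. signof p * (\<Prod>i=0..<d. A x $$ (i, p i)))" for x
    using A[of x] unfolding det_def by auto
  ultimately show ?thesis by simp
qed

lemma polyfun_mult_mat_index:
  fixes A B :: "'a::comm_ring_1 \<Rightarrow> 'a mat"
  assumes A: "\<And>x. A x \<in> carrier_mat d e" and B: "\<And>x. B x \<in> carrier_mat e f"
    and "\<And>i j. i < d \<Longrightarrow> j < e \<Longrightarrow> polyfun (\<lambda>x. A x $$ (i,j))"
    and "\<And>i j. i < e \<Longrightarrow> j < f \<Longrightarrow> polyfun (\<lambda>x. B x $$ (i,j))"
    and i: "i < d" and j: "j < f"
  shows "polyfun (\<lambda>x. (A x * B x) $$ (i,j))"
proof -
  have "polyfun (\<lambda>x. \<Sum>r<e. A x $$ (i,r) * B x $$ (r,j))"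
    by (intro polyfun_sum polyfun_mult) (use assms in auto)
  then show ?thesis by (simp add: index_mult_mat_sum[OF A B i j])
qed

lemma polyfun_eq_0_of_mult_eq_0:
  fixes f g :: "'a::{idom,ring_char_0} \<Rightarrow> 'a"
  assumes "polyfun f" "polyfun g" and fg: "\<And>x. f x * g x = 0" and "g c \<noteq> 0"
  shows "f x = 0"
proof -
  obtain p q where p: "\<And>x. f x = poly p x" and q: "\<And>x. g x = poly q x"
    using assms(1,2) unfolding polyfun_def by blast
  have "p * q = 0" using fg by (simp add: p q poly_all_0_iff_0[symmetric])
  moreover have "q \<noteq> 0" using \<open>g c \<noteq> 0\<close> q by auto
  ultimately show ?thesis using p by simp
qed

lemma Qmat_carrier[simp]: "Qmat n m b k \<mu> \<in> carrier_mat (m*n) (m*n)"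
  and dim_Qmat[simp]: "dim_row (Qmat n m b k \<mu>) = m*n" "dim_col (Qmat n m b k \<mu>) = m*n"
  by (simp_all add: Qmat_def)

lemma Qprod_carrier[simp]: "Qprod n m b k l \<mu> \<in> carrier_mat (m*n) (m*n)"
  by (induction l) auto

lemma rvec_carrier[simp]: "rvec n m b k \<in> carrier_mat (m*n) n"
  by (simp add: rvec_def)

lemma Qprod_Suc_left: "Qprod n m b k (Suc l) \<mu> = Qmat n m b k \<mu> * Qprod n m b (Suc k) l \<mu>"
proof (induction l)
  case (Suc l)
  have "Qprod n m b k (Suc (Suc l)) \<mu> = (Qmat n m b k \<mu> * Qprod n m b (Suc k) l \<mu>) * Qmat n m b (Suc k + l) \<mu>"
    using Suc by simp
  also have "\<dots> = Qmat n m b k \<mu> * Qprod n m b (Suc k) (Suc l) \<mu>"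
    by (simp add: assoc_mult_mat[OF Qmat_carrier Qprod_carrier Qmat_carrier])
  finally show ?case .
qed simp

lemma Qprod_periodic:
  assumes "\<And>k i. b (k + N) i = b k i"
  shows "Qprod n m b (k + N) l \<mu> = Qprod n m b k l \<mu>"
proof (induction l)
  case (Suc l)
  have "k + N + l = (k + l) + N" by simp
  then have "Qmat n m b (k + N + l) \<mu> = Qmat n m b (k + l) \<mu>"
    unfolding Qmat_def by (simp only: assms)
  then show ?case using Suc by simp
qed simp

lemma polyfun_Qprod_index:
  assumes "i < m*n" "j < m*n"
  shows "polyfun (\<lambda>\<mu>. Qprod n m b k l \<mu> $$ (i,j))"
  using assms
proof (induction l arbitrary: i j)
  case (Suc l)
  have "polyfun (\<lambda>\<mu>. Qmat n m b k' \<mu> $$ (i,j))" if "i < m*n" "j < m*n" for k' i j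
    using that unfolding Qmat_def by (simp add: polyfun_const polyfun_mult polyfun_ident polyfun_if)
  then show ?case
    using Suc by (simp only: Qprod.simps) (rule polyfun_mult_mat_index[OF Qprod_carrier Qmat_carrier])
qed (auto simp: polyfun_const)

lemma polyfun_det_char_Qprod: "polyfun (\<lambda>\<mu>. det (Qprod n m b k l \<mu> - \<eta> \<cdot>\<^sub>m 1\<^sub>m (m*n)))"
proof (rule polyfun_det)
  fix i j assume ij: "i < m*n" "j < m*n"
  then show "polyfun (\<lambda>\<mu>. (Qprod n m b k l \<mu> - \<eta> \<cdot>\<^sub>m 1\<^sub>m (m*n)) $$ (i,j))"
    using polyfun_diff[OF polyfun_Qprod_index[OF ij] polyfun_const] by simp
qed auto

section \<open>The monodromy in the basis \<open>N\<^sub>0(\<mu>)\<close>\<close>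

lemma sum_odd_shift_reindex:
  fixes m l :: nat
  assumes "even m" "l \<le> m"
  shows "(\<Sum>c<m. if l \<le> 2*c+1 \<and> 2*c+1 < l+m then h (2*c+1-l) else 0)
       = (\<Sum>i<m. if odd (i+l) then h i else (0::'a::comm_monoid_add))"
proof -
  have "(\<Sum>c<m. if l \<le> 2*c+1 \<and> 2*c+1 < l+m then h (2*c+1-l) else 0)
      = (\<Sum>c\<in>{c\<in>{..<m}. l \<le> 2*c+1 \<and> 2*c+1 < l+m}. h (2*c+1-l))"
    by (rule sum.inter_filter[symmetric]) simp
  also have "\<dots> = (\<Sum>i\<in>{i\<in>{..<m}. odd (i+l)}. h i)"
  proof (rule sum.reindex_bij_witness[of _ "\<lambda>i. (i+l) div 2" "\<lambda>c. 2*c+1-l"])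
    fix i assume "i \<in> {i\<in>{..<m}. odd (i+l)}"
    moreover from this have "2 * ((i+l) div 2) + 1 = i + l" by (simp add: odd_two_times_div_two_succ)
    ultimately show "2 * ((i+l) div 2) + 1 - l = i" "(i+l) div 2 \<in> {c\<in>{..<m}. l \<le> 2*c+1 \<and> 2*c+1 < l+m}"
      using assms by auto
  qed (use assms in auto)
  also have "\<dots> = (\<Sum>i<m. if odd (i+l) then h i else 0)"
    by (rule sum.inter_filter) simp
  finally show ?thesis .
qed

definition odd_factor :: "complex \<Rightarrow> nat \<Rightarrow> complex" where
  "odd_factor \<mu> i = (if odd i then \<mu> else 1)"

lemma odd_factor_one[simp]: "odd_factor 1 i = 1"
  by (simp add: odd_factor_def)

declare Qprod.simps(2)[simp del]

locale even_coords =
  fixes n m :: nat and a :: coords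
  assumes m_pos: "0 < m" and m_even: "even m"
    and a_carrier: "\<And>k i. a k i \<in> carrier_mat n n"
begin

lemma odd_factor_m[simp]: "odd_factor \<mu> m = 1"
  using m_even by (simp add: odd_factor_def)

definition a_col :: "nat \<Rightarrow> complex mat" where
  "a_col k = mat (m*n) n (\<lambda>(p,u). a k (p div n) $$ (p mod n, u))"

lemma a_col_carrier[simp]: "a_col k \<in> carrier_mat (m*n) n"
  and dim_a_col[simp]: "dim_row (a_col k) = m*n" "dim_col (a_col k) = n"
  by (simp_all add: a_col_def)

lemma index_a_col_block: "i < m \<Longrightarrow> w < n \<Longrightarrow> u < n \<Longrightarrow> a_col k $$ (i*n + w, u) = a k i $$ (w,u)"
  by (simp add: a_col_def block_index_less)

lemma Qmat_eq_companion: "Qmat n m a k \<mu> = companion m n (scale_row_blocks n (odd_factor \<mu>) (a_col k))"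
  by (rule eq_matI) (auto simp: Qmat_def companion_def a_col_def odd_factor_def mod_less_of_less_mult)

lemma Qprod_Suc_index:
  assumes p: "p < m*n" and q: "q < m*n" and "Suc (q div n) < m"
  shows "Qprod n m a k (Suc l) \<mu> $$ (p,q) = Qprod n m a k l \<mu> $$ (p, q + n)"
proof -
  have "q div n \<noteq> m - 1" using assms(3) by linarith
  then show ?thesis
    using mult_companion_index[OF Qprod_carrier _ p q]
    by (simp add: Qprod.simps Qmat_eq_companion del: index_mult_mat)
qed

lemma Qprod_block_col:
  assumes p: "p < m*n" and "i < m" and u: "u < n"
  shows "Qprod n m a k l \<mu> $$ (p, i*n + u) = Qprod n m a k (l + i) \<mu> $$ (p,u)"
  using assms(2)
proof (induction i arbitrary: l)
  case (Suc i)
  have "Qprod n m a k (Suc l) \<mu> $$ (p, i*n + u) = Qprod n m a k l \<mu> $$ (p, i*n + u + n)"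
    using Suc.prems u p by (intro Qprod_Suc_index) (auto intro: block_index_less)
  then have "Qprod n m a k l \<mu> $$ (p, Suc i * n + u) = Qprod n m a k (Suc l) \<mu> $$ (p, i*n + u)"
    by (simp add: algebra_simps)
  then show ?case using Suc by simp
qed simp

text \<open>\<open>phi_term k l \<mu> p u i\<close> is the \<open>(p,u)\<close> entry of \<open>\<phi>\<^sub>l\<^sub>+\<^sub>i a\<^sup>i\<^sub>k\<^sub>+\<^sub>l\<close>, where
  \<open>\<phi>\<^sub>j\<close> is the first block column of \<open>Q\<^sub>k(\<mu>) \<cdots> Q\<^sub>k\<^sub>+\<^sub>j\<^sub>-\<^sub>1(\<mu>)\<close>.\<close>

definition phi_term :: "nat \<Rightarrow> nat \<Rightarrow> complex \<Rightarrow> nat \<Rightarrow> nat \<Rightarrow> nat \<Rightarrow> complex" where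
  "phi_term k l \<mu> p u i = (\<Sum>w<n. Qprod n m a k (l + i) \<mu> $$ (p,w) * a (k + l) i $$ (w,u))"

lemma Qprod_recurrence:
  assumes p: "p < m*n" and u: "u < n"
  shows "Qprod n m a k (l + m) \<mu> $$ (p,u) = (\<Sum>i<m. odd_factor \<mu> i * phi_term k l \<mu> p u i)"
proof -
  have last: "(m-1)*n + u < m*n" "((m-1)*n + u) div n = m - 1" "((m-1)*n + u) mod n = u"
    using m_pos u by (auto intro: block_index_less)
  have "Qprod n m a k (l + m) \<mu> $$ (p,u) = Qprod n m a k (Suc l) \<mu> $$ (p, (m-1)*n + u)"
    using Qprod_block_col[OF p _ u, of "m-1" k "Suc l"] m_pos by simp
  also have "\<dots> = (Qprod n m a k l \<mu> * scale_row_blocks n (odd_factor \<mu>) (a_col (k + l))) $$ (p,u)"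
    using last mult_companion_index[OF Qprod_carrier _ p last(1)]
    by (simp add: Qprod.simps Qmat_eq_companion del: index_mult_mat)
  also have "\<dots> = (\<Sum>i<m. \<Sum>w<n. Qprod n m a k l \<mu> $$ (p, i*n + w) * (odd_factor \<mu> i * a (k + l) i $$ (w,u)))"
  proof -
    have "scale_row_blocks n (odd_factor \<mu>) (a_col (k + l)) $$ (i*n + w, u)
        = odd_factor \<mu> i * a (k + l) i $$ (w,u)" if "i < m" "w < n" for i w
      using that u by (simp add: block_index_less index_a_col_block)
    then show ?thesis
      by (simp add: index_mult_mat_sum[OF Qprod_carrier _ p u] sum_lessThan_mult_blocks)
  qed
  also have "\<dots> = (\<Sum>i<m. odd_factor \<mu> i * phi_term k l \<mu> p u i)"
    by (simp add: phi_term_def sum_distrib_left mult.left_commute)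
      (intro sum.cong refl, simp add: Qprod_block_col[OF p])
  finally show ?thesis .
qed

definition F_mu :: "nat \<Rightarrow> nat \<Rightarrow> complex \<Rightarrow> complex mat" where
  "F_mu k l \<mu> = Qprod n m a k l \<mu> * rvec n m a (k + l)"

definition N_mu :: "nat \<Rightarrow> complex \<Rightarrow> complex mat" where
  "N_mu k \<mu> = block_cols (m*n) m n (\<lambda>l. F_mu k l \<mu>)"

lemma F_mu_carrier[simp]: "F_mu k l \<mu> \<in> carrier_mat (m*n) n"
  unfolding F_mu_def by (rule mult_carrier_mat[of _ _ "m*n"]) auto

lemma dim_F_mu[simp]: "dim_row (F_mu k l \<mu>) = m*n" "dim_col (F_mu k l \<mu>) = n"
  using F_mu_carrier by blast+

lemma N_mu_carrier[simp]: "N_mu k \<mu> \<in> carrier_mat (m*n) (m*n)"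
  by (simp add: N_mu_def)

lemma Fvec_eq_F_mu: "Fvec n m a k l = F_mu k l 1"
  by (simp add: Fvec_def F_mu_def)

lemma Nmat_eq_N_mu: "Nmat n m a k = N_mu k 1"
  by (simp add: Nmat_def N_mu_def block_cols_def Fvec_eq_F_mu)

lemma Nmat_carrier[simp]: "Nmat n m a k \<in> carrier_mat (m*n) (m*n)"
  by (simp add: Nmat_eq_N_mu)

lemma F_mu_index:
  assumes p: "p < m*n" and u: "u < n"
  shows "F_mu k l \<mu> $$ (p,u) = (\<Sum>i<m. if odd i then phi_term k l \<mu> p u i else 0)"
proof -
  have "F_mu k l \<mu> $$ (p,u)
      = (\<Sum>i<m. \<Sum>w<n. Qprod n m a k l \<mu> $$ (p, i*n + w) * rvec n m a (k + l) $$ (i*n + w, u))"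
    unfolding F_mu_def by (simp add: index_mult_mat_sum[OF Qprod_carrier rvec_carrier p u] sum_lessThan_mult_blocks)
  also have "\<dots> = (\<Sum>i<m. if odd i then phi_term k l \<mu> p u i else 0)"
    using u by (auto simp: phi_term_def rvec_def Qprod_block_col[OF p] block_index_less intro!: sum.cong)
  finally show ?thesis .
qed

lemma Qmat_mult_F_mu: "Qmat n m a k \<mu> * F_mu (Suc k) l \<mu> = F_mu k (Suc l) \<mu>"
  unfolding F_mu_def Qprod_Suc_left
  by (simp add: assoc_mult_mat[OF Qmat_carrier Qprod_carrier rvec_carrier])


text \<open>The vectors \<open>\<phi>\<^sub>2\<^sub>c\<^sub>+\<^sub>1\<close> (\<open>c < m\<close>) span all \<open>odd_factor \<mu> l \<cdot> F\<^sub>l(\<mu>)\<close>, \<open>l \<le> m\<close>, with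
  coefficients independent of \<open>\<mu>\<close>: for even \<open>l\<close>, \<open>F\<^sub>l\<close> only involves \<open>\<phi>\<^sub>l\<^sub>+\<^sub>i\<close> with \<open>i\<close> odd;
  for odd \<open>l\<close>, \<open>Qprod_recurrence\<close> trades \<open>\<mu> F\<^sub>l\<close> for \<open>\<phi>\<^sub>l\<^sub>+\<^sub>m\<close> minus the terms with
  \<open>i\<close> even. Here \<open>m\<close> even makes \<open>l + i\<close> odd in both cases.\<close>

definition t_coeff :: "nat \<Rightarrow> nat \<Rightarrow> nat \<Rightarrow> nat \<Rightarrow> nat \<Rightarrow> complex" where
  "t_coeff k l c w u = (if odd l \<and> 2*c+1 = l+m \<and> w = u then 1 else 0)
     + (if l \<le> 2*c+1 \<and> 2*c+1 < l+m then (if odd l then -1 else 1) * a (k+l) (2*c+1-l) $$ (w,u) else 0)"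

lemma sum_Qprod_t_coeff_shift_part:
  assumes l: "l \<le> m" and u: "u < n"
  shows "(\<Sum>c<m. \<Sum>w<n. Qprod n m a k (2*c+1) \<mu> $$ (p,w) * (if odd l \<and> 2*c+1 = l+m \<and> w = u then 1 else 0))
       = (if odd l then Qprod n m a k (l+m) \<mu> $$ (p,u) else 0)"
proof (cases "odd l")
  case True
  define c0 where "c0 = (l+m) div 2"
  have c0: "2*c0+1 = l+m" using True m_even unfolding c0_def by (simp add: odd_two_times_div_two_succ)
  have "c0 < m" using c0 l True m_even by (cases "l = m") auto
  have "(\<Sum>w<n. Qprod n m a k (2*c+1) \<mu> $$ (p,w) * (if odd l \<and> 2*c+1 = l+m \<and> w = u then 1 else 0))
      = (if c = c0 then Qprod n m a k (l+m) \<mu> $$ (p,u) else 0)" for c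
    using c0 True u by (auto simp: if_distrib[of "\<lambda>x. _ * x"] cong: if_cong)
  then show ?thesis using \<open>c0 < m\<close> True by simp
qed simp

lemma sum_Qprod_t_coeff_a_part:
  assumes l: "l \<le> m"
  shows "(\<Sum>c<m. \<Sum>w<n. Qprod n m a k (2*c+1) \<mu> $$ (p,w)
            * (if l \<le> 2*c+1 \<and> 2*c+1 < l+m then s * a (k+l) (2*c+1-l) $$ (w,u) else 0))
       = (\<Sum>i<m. if odd (i+l) then s * phi_term k l \<mu> p u i else 0)"
proof -
  have "(\<Sum>w<n. Qprod n m a k (2*c+1) \<mu> $$ (p,w)
            * (if l \<le> 2*c+1 \<and> 2*c+1 < l+m then s * a (k+l) (2*c+1-l) $$ (w,u) else 0))
      = (if l \<le> 2*c+1 \<and> 2*c+1 < l+m then s * phi_term k l \<mu> p u (2*c+1-l) else 0)" for c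
  proof (cases "l \<le> 2*c+1 \<and> 2*c+1 < l+m")
    case False
    then show ?thesis by (simp only: if_not_P[OF False] if_False mult_zero_right sum.neutral_const)
  qed (simp add: phi_term_def sum_distrib_left mult.left_commute)
  then show ?thesis
    using sum_odd_shift_reindex[OF m_even l, of "\<lambda>i. s * phi_term k l \<mu> p u i"] by simp
qed

lemma sum_Qprod_t_coeff:
  assumes l: "l \<le> m" and p: "p < m*n" and u: "u < n"
  shows "(\<Sum>c<m. \<Sum>w<n. Qprod n m a k (2*c+1) \<mu> $$ (p,w) * t_coeff k l c w u)
       = odd_factor \<mu> l * F_mu k l \<mu> $$ (p,u)"
proof -
  let ?A = "phi_term k l \<mu> p u"
  have "(\<Sum>c<m. \<Sum>w<n. Qprod n m a k (2*c+1) \<mu> $$ (p,w) * t_coeff k l c w u)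
      = (if odd l then Qprod n m a k (l+m) \<mu> $$ (p,u) else 0)
        + (\<Sum>i<m. if odd (i+l) then (if odd l then -1 else 1) * ?A i else 0)"
    unfolding t_coeff_def distrib_left sum.distrib sum_Qprod_t_coeff_shift_part[OF l u]
      sum_Qprod_t_coeff_a_part[OF l] ..
  also have "\<dots> = odd_factor \<mu> l * (\<Sum>i<m. if odd i then ?A i else 0)"
  proof (cases "odd l")
    case True
    have split: "(\<Sum>i<m. odd_factor \<mu> i * ?A i)
        = \<mu> * (\<Sum>i<m. if odd i then ?A i else 0) + (\<Sum>i<m. if odd i then 0 else ?A i)"
      by (simp add: sum_distrib_left sum.distrib[symmetric]) (intro sum.cong refl, simp add: odd_factor_def)
    have neg: "(\<Sum>i<m. if odd (i+l) then (if odd l then -1 else 1) * ?A i else 0)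
        = - (\<Sum>i<m. if odd i then 0 else ?A i)"
      using True by (subst sum_negf[symmetric]) (intro sum.cong refl, auto)
    show ?thesis
      using True by (subst neg) (simp only: if_P[OF True] Qprod_recurrence[OF p u] split, simp add: odd_factor_def)
  qed (simp add: odd_factor_def cong: if_cong)
  finally show ?thesis by (simp add: F_mu_index[OF p u])
qed

definition W_mu :: "nat \<Rightarrow> complex \<Rightarrow> complex mat" where
  "W_mu k \<mu> = block_cols (m*n) m n (\<lambda>c. mat (m*n) n (\<lambda>(p,w). Qprod n m a k (2*c+1) \<mu> $$ (p,w)))"

definition T_block :: "nat \<Rightarrow> nat \<Rightarrow> complex mat" where
  "T_block k l = mat (m*n) n (\<lambda>(r,u). t_coeff k l (r div n) (r mod n) u)"

definition T_coeff :: "nat \<Rightarrow> complex mat" where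
  "T_coeff k = block_cols (m*n) m n (T_block k)"

lemma W_mu_carrier[simp]: "W_mu k \<mu> \<in> carrier_mat (m*n) (m*n)"
  by (simp add: W_mu_def)

lemma T_block_carrier[simp]: "T_block k l \<in> carrier_mat (m*n) n"
  by (simp add: T_block_def)

lemma dim_W_mu[simp]: "dim_row (W_mu k \<mu>) = m*n" "dim_col (W_mu k \<mu>) = m*n"
  and dim_T_block[simp]: "dim_row (T_block k l) = m*n" "dim_col (T_block k l) = n"
  by (simp_all add: W_mu_def T_block_def)

lemma T_coeff_carrier[simp]: "T_coeff k \<in> carrier_mat (m*n) (m*n)"
  by (simp add: T_coeff_def)

lemma W_mu_mult_T_block:
  assumes "l \<le> m"
  shows "W_mu k \<mu> * T_block k l = odd_factor \<mu> l \<cdot>\<^sub>m F_mu k l \<mu>"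
proof (rule eq_matI)
  fix p u assume "p < dim_row (odd_factor \<mu> l \<cdot>\<^sub>m F_mu k l \<mu>)" "u < dim_col (odd_factor \<mu> l \<cdot>\<^sub>m F_mu k l \<mu>)"
  then have p: "p < m*n" and u: "u < n" by auto
  have "W_mu k \<mu> $$ (p, c*n + w) * T_block k l $$ (c*n + w, u)
      = Qprod n m a k (2*c+1) \<mu> $$ (p,w) * t_coeff k l c w u" if "c < m" "w < n" for c w
    using that p u block_index_less[OF that] by (simp add: W_mu_def T_block_def)
  then have "(W_mu k \<mu> * T_block k l) $$ (p,u)
      = (\<Sum>c<m. \<Sum>w<n. Qprod n m a k (2*c+1) \<mu> $$ (p,w) * t_coeff k l c w u)"
    by (simp add: index_mult_mat_sum[OF W_mu_carrier T_block_carrier p u] sum_lessThan_mult_blocks)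
  also have "\<dots> = odd_factor \<mu> l * F_mu k l \<mu> $$ (p,u)"
    by (rule sum_Qprod_t_coeff[OF assms p u])
  finally show "(W_mu k \<mu> * T_block k l) $$ (p,u) = (odd_factor \<mu> l \<cdot>\<^sub>m F_mu k l \<mu>) $$ (p,u)"
    using p u by simp
qed auto

lemma W_mu_mult_T_coeff: "W_mu k \<mu> * T_coeff k = block_cols (m*n) m n (\<lambda>l. odd_factor \<mu> l \<cdot>\<^sub>m F_mu k l \<mu>)"
  unfolding T_coeff_def
  by (simp add: mult_block_cols[OF W_mu_carrier T_block_carrier] W_mu_mult_T_block cong: block_cols_cong)

end

locale pentagram_setting = even_coords +
  fixes lam :: "coords \<Rightarrow> nat \<Rightarrow> complex mat"
  assumes Nmat_invertible: "\<And>k. invertible_mat (Nmat n m a k)"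
    and lam_carrier: "\<And>k. lam a k \<in> carrier_mat n n"
    and lam_invertible: "\<And>k. invertible_mat (lam a k)"
begin

definition G :: "nat \<Rightarrow> complex mat" where
  "G k = minv (Nmat n m a k) * F_mu k m 1"

lemma minv_Nmat_carrier[simp]: "minv (Nmat n m a k) \<in> carrier_mat (m*n) (m*n)"
  by (rule minv_inverse(3)[OF Nmat_carrier Nmat_invertible])

lemma G_carrier[simp]: "G k \<in> carrier_mat (m*n) n"
  unfolding G_def by (rule mult_carrier_mat[OF minv_Nmat_carrier F_mu_carrier])

text \<open>\<open>W\<^sub>k(1)\<close> is invertible since \<open>N\<^sub>k = W\<^sub>k(1) T\<^sub>k\<close> is, so \<open>T\<^sub>k G\<^sub>k = T\<^sub>k\<^sub>,\<^sub>m\<close> can be read off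
  from \<open>W\<^sub>k(1) T\<^sub>k G\<^sub>k = F\<^sub>m(1) = W\<^sub>k(1) T\<^sub>k\<^sub>,\<^sub>m\<close>.\<close>

lemma T_coeff_mult_G: "T_coeff k * G k = T_block k m"
proof -
  let ?N = "Nmat n m a k" and ?W = "W_mu k 1"
  have N: "?N = ?W * T_coeff k" by (simp add: Nmat_eq_N_mu N_mu_def W_mu_mult_T_coeff)
  have "det ?W * det (T_coeff k) \<noteq> 0"
    using invertible_mat_det_nonzero[OF Nmat_carrier Nmat_invertible, of k] det_mult[OF W_mu_carrier T_coeff_carrier]
    by (simp add: N)
  then have "?W \<in> Units (ring_mat TYPE(complex) (m*n) ())"
    by (intro det_non_zero_imp_unit) auto
  then obtain B where B: "B \<in> carrier_mat (m*n) (m*n)" "B * ?W = 1\<^sub>m (m*n)"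
    unfolding Units_def by (auto simp: ring_mat_simps)
  have "?W * (T_coeff k * G k) = ?N * G k"
    by (simp add: N assoc_mult_mat[OF W_mu_carrier T_coeff_carrier G_carrier])
  also have "\<dots> = F_mu k m 1"
    using minv_inverse(1)[OF Nmat_carrier Nmat_invertible, of k]
    by (simp add: G_def assoc_mult_mat[OF Nmat_carrier minv_Nmat_carrier F_mu_carrier, symmetric])
  also have "\<dots> = ?W * T_block k m" by (simp add: W_mu_mult_T_block)
  finally have WTG: "?W * (T_coeff k * G k) = ?W * T_block k m" .
  have TG: "T_coeff k * G k \<in> carrier_mat (m*n) n" by (rule mult_carrier_mat[OF T_coeff_carrier G_carrier])
  have "T_coeff k * G k = (B * ?W) * (T_coeff k * G k)" using B(2) left_mult_one_mat[OF TG] by simp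
  also have "\<dots> = B * (?W * T_block k m)"
    unfolding WTG[symmetric] by (rule assoc_mult_mat[OF B(1) W_mu_carrier TG])
  also have "\<dots> = (B * ?W) * T_block k m"
    by (rule assoc_mult_mat[OF B(1) W_mu_carrier T_block_carrier, symmetric])
  finally show ?thesis using B(2) left_mult_one_mat[OF T_block_carrier] by simp
qed

definition X_mu :: "nat \<Rightarrow> complex \<Rightarrow> complex mat" where
  "X_mu k \<mu> = scale_row_blocks n (odd_factor \<mu>) (G k)"

lemma X_mu_carrier[simp]: "X_mu k \<mu> \<in> carrier_mat (m*n) n"
  by (simp add: X_mu_def)

lemma N_mu_mult_X_mu: "N_mu k \<mu> * X_mu k \<mu> = F_mu k m \<mu>"
proof -
  have "N_mu k \<mu> * X_mu k \<mu> = (W_mu k \<mu> * T_coeff k) * G k"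
    unfolding N_mu_def X_mu_def W_mu_mult_T_coeff
    by (rule block_cols_mult_scale_row_blocks[OF F_mu_carrier G_carrier])
  also have "\<dots> = W_mu k \<mu> * T_block k m"
    by (simp add: assoc_mult_mat[OF W_mu_carrier T_coeff_carrier G_carrier] T_coeff_mult_G)
  finally show ?thesis by (simp add: W_mu_mult_T_block)
qed

lemma Qmat_mult_N_mu: "Qmat n m a k \<mu> * N_mu (Suc k) \<mu> = N_mu k \<mu> * companion m n (X_mu k \<mu>)"
proof -
  have "Qmat n m a k \<mu> * N_mu (Suc k) \<mu> = block_cols (m*n) m n (\<lambda>l. F_mu k (Suc l) \<mu>)"
    unfolding N_mu_def by (simp add: mult_block_cols[OF Qmat_carrier F_mu_carrier] Qmat_mult_F_mu)
  also have "\<dots> = block_cols (m*n) m n (\<lambda>l. if Suc l < m then F_mu k (Suc l) \<mu> else N_mu k \<mu> * X_mu k \<mu>)"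
  proof (rule block_cols_cong)
    fix l assume "l < m"
    then have "\<not> Suc l < m \<Longrightarrow> Suc l = m" by linarith
    then show "F_mu k (Suc l) \<mu> = (if Suc l < m then F_mu k (Suc l) \<mu> else N_mu k \<mu> * X_mu k \<mu>)"
      by (auto simp: N_mu_mult_X_mu)
  qed
  also have "\<dots> = N_mu k \<mu> * companion m n (X_mu k \<mu>)"
    unfolding N_mu_def by (rule block_cols_mult_companion[OF F_mu_carrier X_mu_carrier, symmetric])
  finally show ?thesis .
qed


section \<open>The monodromy of the image coordinates\<close>

abbreviation Lam :: "nat \<Rightarrow> complex mat" where
  "Lam k \<equiv> Lmat n m (lam a) k"

lemma Lam_invertible: "invertible_mat (Lam k)"
  by (rule Lmat_invertible[OF lam_carrier lam_invertible])

lemma minv_Lam_carrier[simp]: "minv (Lam k) \<in> carrier_mat (m*n) (m*n)"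
  by (rule minv_inverse(3)[OF Lmat_carrier Lam_invertible])

definition Tmap_mat :: "nat \<Rightarrow> complex mat" where
  "Tmap_mat k = minv (Lam k) * minv (Nmat n m a k) * Qmat n m a k 1 * Nmat n m a (Suc k) * Lam (Suc k)"

lemma Tmap_mat_carrier[simp]: "Tmap_mat k \<in> carrier_mat (m*n) (m*n)"
  unfolding Tmap_mat_def by (intro mult_carrier_mat[of _ "m*n" "m*n" _ "m*n"]) auto

lemma Qmat_Tmap_eq_companion:
  "Qmat n m (Tmap n m lam a) k \<mu>
     = companion m n (scale_row_blocks n (odd_factor \<mu>) (last_block_col m n (Tmap_mat k)))"
  by (rule eq_matI) (auto simp: Qmat_def companion_def Tmap_def Tmap_mat_def Let_def
      last_block_col_def odd_factor_def mod_less_of_less_mult)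

lemma Lam_mult_Tmap_mat: "Lam k * Tmap_mat k = companion m n (G k) * Lam (Suc k)"
proof -
  let ?N = "Nmat n m a k" and ?N' = "Nmat n m a (Suc k)" and ?Q = "Qmat n m a k 1"
    and ?C = "companion m n (G k)"
  have "?Q * ?N' = ?N * ?C"
    using Qmat_mult_N_mu[of k 1] by (simp add: Nmat_eq_N_mu X_mu_def scale_row_blocks_ones)
  then have QN: "?Q * (?N' * Lam (Suc k)) = ?N * (?C * Lam (Suc k))"
    by (simp add: assoc_mult_mat[OF Qmat_carrier Nmat_carrier Lmat_carrier, symmetric]
        assoc_mult_mat[OF Nmat_carrier companion_carrier Lmat_carrier, symmetric])
  have "Lam k * Tmap_mat k = Lam k * (minv (Lam k) * (minv ?N * (?Q * (?N' * Lam (Suc k)))))"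
    by (simp add: Tmap_mat_def assoc_mult_mat[of _ "m*n" "m*n" _ "m*n" _ "m*n"]
        mult_carrier_mat[of _ "m*n" "m*n" _ "m*n"])
  also have "\<dots> = minv ?N * (?N * (?C * Lam (Suc k)))"
    unfolding QN by (rule mult_left_inverse_cancel[OF minv_Lam_carrier Lmat_carrier
          minv_inverse(1)[OF Lmat_carrier Lam_invertible], where e="m*n"])
      (simp add: mult_carrier_mat[of _ "m*n" "m*n" _ "m*n"])
  also have "\<dots> = ?C * Lam (Suc k)"
    by (rule mult_left_inverse_cancel[OF Nmat_carrier minv_Nmat_carrier
          minv_inverse(2)[OF Nmat_carrier Nmat_invertible], where e="m*n"])
      (simp add: mult_carrier_mat[of _ "m*n" "m*n" _ "m*n"])
  finally show ?thesis .
qed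

lemma Lam_mult_last_block_col_Tmap_mat: "Lam k * last_block_col m n (Tmap_mat k) = G k * lam a (k + m)"
proof -
  have "Lam k * last_block_col m n (Tmap_mat k) = last_block_col m n (Lam k * Tmap_mat k)"
    by (rule last_block_col_mult[OF Lmat_carrier Tmap_mat_carrier m_pos, symmetric])
  also have "\<dots> = G k * lam a (Suc k + m - 1)"
    by (simp add: Lam_mult_Tmap_mat last_block_col_companion_mult_Lmat[OF m_pos G_carrier lam_carrier])
  finally show ?thesis using m_pos by simp
qed

lemma Lam_mult_Qmat_Tmap: "Lam k * Qmat n m (Tmap n m lam a) k \<mu> = companion m n (X_mu k \<mu>) * Lam (Suc k)"
proof -
  have LY: "Lam k * scale_row_blocks n (odd_factor \<mu>) (last_block_col m n (Tmap_mat k))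
      = X_mu k \<mu> * lam a (k + m)"
    by (simp add: Lmat_mult_scale_row_blocks[OF last_block_col_carrier] Lam_mult_last_block_col_Tmap_mat
        X_mu_def scale_row_blocks_mult[OF G_carrier lam_carrier])
  show ?thesis
    unfolding Qmat_Tmap_eq_companion
    by (rule Lmat_mult_companion[OF m_pos scale_row_blocks_carrier[OF last_block_col_carrier]
          X_mu_carrier lam_carrier LY])
qed

primrec companion_prod :: "complex \<Rightarrow> nat \<Rightarrow> complex mat" where
  "companion_prod \<mu> 0 = 1\<^sub>m (m*n)"
| "companion_prod \<mu> (Suc l) = companion_prod \<mu> l * companion m n (X_mu l \<mu>)"

lemma companion_prod_carrier[simp]: "companion_prod \<mu> l \<in> carrier_mat (m*n) (m*n)"
  by (induction l) auto

lemma Qprod_mult_N_mu: "Qprod n m a 0 l \<mu> * N_mu l \<mu> = N_mu 0 \<mu> * companion_prod \<mu> l"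
proof (induction l)
  case (Suc l)
  have "Qprod n m a 0 (Suc l) \<mu> * N_mu (Suc l) \<mu> = Qprod n m a 0 l \<mu> * (Qmat n m a l \<mu> * N_mu (Suc l) \<mu>)"
    by (simp add: Qprod.simps assoc_mult_mat[OF Qprod_carrier Qmat_carrier N_mu_carrier])
  also have "\<dots> = (Qprod n m a 0 l \<mu> * N_mu l \<mu>) * companion m n (X_mu l \<mu>)"
    by (simp add: Qmat_mult_N_mu assoc_mult_mat[OF Qprod_carrier N_mu_carrier companion_carrier])
  finally show ?case by (simp add: Suc assoc_mult_mat[OF N_mu_carrier companion_prod_carrier companion_carrier])
qed (simp add: left_mult_one_mat[OF N_mu_carrier] right_mult_one_mat[OF N_mu_carrier])

lemma Lam_mult_Qprod_Tmap: "Lam 0 * Qprod n m (Tmap n m lam a) 0 l \<mu> = companion_prod \<mu> l * Lam l"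
proof (induction l)
  case (Suc l)
  have "Lam 0 * Qprod n m (Tmap n m lam a) 0 (Suc l) \<mu>
      = (Lam 0 * Qprod n m (Tmap n m lam a) 0 l \<mu>) * Qmat n m (Tmap n m lam a) l \<mu>"
    by (simp add: Qprod.simps assoc_mult_mat[OF Lmat_carrier Qprod_carrier Qmat_carrier])
  also have "\<dots> = companion_prod \<mu> l * (Lam l * Qmat n m (Tmap n m lam a) l \<mu>)"
    by (simp add: Suc assoc_mult_mat[OF companion_prod_carrier Lmat_carrier Qmat_carrier])
  finally show ?case
    by (simp add: Lam_mult_Qmat_Tmap assoc_mult_mat[OF companion_prod_carrier companion_carrier Lmat_carrier])
qed (simp add: left_mult_one_mat[OF Lmat_carrier] right_mult_one_mat[OF Lmat_carrier])

lemma det_char_Tmap_mult_det_N_mu: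
  assumes a_periodic: "\<And>k i. a (k + N) i = a k i" and lam_periodic: "\<And>k. lam a (k + N) = lam a k"
  shows "det (Qprod n m (Tmap n m lam a) 0 N \<mu> - \<eta> \<cdot>\<^sub>m 1\<^sub>m (m*n)) * det (N_mu 0 \<mu>)
       = det (Qprod n m a 0 N \<mu> - \<eta> \<cdot>\<^sub>m 1\<^sub>m (m*n)) * det (N_mu 0 \<mu>)"
proof -
  let ?C = "companion_prod \<mu> N"
  have "rvec n m a (N + l) = rvec n m a l" for l
    using a_periodic by (simp add: rvec_def add.commute[of N] cong: if_cong)
  then have "N_mu N \<mu> = N_mu 0 \<mu>"
    using Qprod_periodic[where b=a and N=N and k=0, OF a_periodic] by (simp add: N_mu_def F_mu_def)
  then have "Qprod n m a 0 N \<mu> * N_mu 0 \<mu> = N_mu 0 \<mu> * ?C"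
    using Qprod_mult_N_mu[of N \<mu>] by simp
  from det_char_mat_intertwine[OF Qprod_carrier companion_prod_carrier N_mu_carrier this]
  have P: "det (Qprod n m a 0 N \<mu> - \<eta> \<cdot>\<^sub>m 1\<^sub>m (m*n)) * det (N_mu 0 \<mu>)
      = det (N_mu 0 \<mu>) * det (?C - \<eta> \<cdot>\<^sub>m 1\<^sub>m (m*n))" .
  have "Lam N = Lam 0" using lam_periodic by (simp add: Lmat_def add.commute[of N] cong: if_cong)
  then have "?C * Lam 0 = Lam 0 * Qprod n m (Tmap n m lam a) 0 N \<mu>"
    using Lam_mult_Qprod_Tmap[of N \<mu>] by simp
  from det_char_mat_intertwine[OF companion_prod_carrier Qprod_carrier Lmat_carrier this]
  have C: "det (?C - \<eta> \<cdot>\<^sub>m 1\<^sub>m (m*n)) = det (Qprod n m (Tmap n m lam a) 0 N \<mu> - \<eta> \<cdot>\<^sub>m 1\<^sub>m (m*n))"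
    using invertible_mat_det_nonzero[OF Lmat_carrier Lam_invertible, of 0] by (simp add: mult.commute)
  show ?thesis using P by (simp only: C[symmetric] mult.commute)
qed

lemma polyfun_det_N_mu: "polyfun (\<lambda>\<mu>. det (N_mu k \<mu>))"
proof (rule polyfun_det[OF N_mu_carrier])
  fix i j assume ij: "i < m*n" "j < m*n"
  have "polyfun (\<lambda>\<mu>. (Qprod n m a k (j div n) \<mu> * rvec n m a (k + j div n)) $$ (i, j mod n))"
    using mod_less_of_less_mult[OF ij(2)] ij
    by (intro polyfun_mult_mat_index[OF Qprod_carrier rvec_carrier]) (auto intro: polyfun_Qprod_index)
  then show "polyfun (\<lambda>\<mu>. N_mu k \<mu> $$ (i,j))"
    using ij by (simp add: N_mu_def F_mu_def)
qed

end

theorem mainTheorem5: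
  fixes n s N :: nat
    and a :: coords
    and lam :: "coords \<Rightarrow> nat \<Rightarrow> complex mat"
    and \<mu> \<eta> :: complex
  assumes "n \<ge> 1" and "s \<ge> 2" and "N \<ge> 1"
    and "\<And>k i. a k i \<in> carrier_mat n n"
    and "\<And>k i. a (k + N) i = a k i"
    and "\<And>k. invertible_mat (Nmat n (2*s) a k)"
    and "\<And>b k. (\<And>j i. b (j + N) i = b j i) \<Longrightarrow> lam b (k + N) = lam b k"
    and "\<And>b c k. c \<noteq> 0 \<Longrightarrow> lam (scale_odd c b) k = (1 / c) \<cdot>\<^sub>m lam b k"
    and "\<And>k. lam a k \<in> carrier_mat n n"
    and "\<And>k. invertible_mat (lam a k)"
    and "\<mu> \<noteq> 0"
  shows "det (Qprod n (2*s) (Tmap n (2*s) lam a) 0 N \<mu> - \<eta> \<cdot>\<^sub>m 1\<^sub>m (2*s*n))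
       = det (Qprod n (2*s) a 0 N \<mu> - \<eta> \<cdot>\<^sub>m 1\<^sub>m (2*s*n))"
proof -
  interpret pentagram_setting n "2*s" a lam
    using assms(2,4,6,9,10) by unfold_locales auto
  let ?chi = "\<lambda>b x. det (Qprod n (2*s) b 0 N x - \<eta> \<cdot>\<^sub>m 1\<^sub>m (2*s*n))"
  have "(?chi (Tmap n (2*s) lam a) x - ?chi a x) * det (N_mu 0 x) = 0" for x
    using det_char_Tmap_mult_det_N_mu[OF assms(5) assms(7)[where b=a, OF assms(5)], of x \<eta>]
    by (simp add: algebra_simps)
  moreover have "polyfun (\<lambda>x. ?chi (Tmap n (2*s) lam a) x - ?chi a x)"
    by (intro polyfun_diff polyfun_det_char_Qprod)
  moreover have "det (N_mu 0 1) \<noteq> 0"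
    using invertible_mat_det_nonzero[OF Nmat_carrier Nmat_invertible] by (simp add: Nmat_eq_N_mu)
  ultimately have "?chi (Tmap n (2*s) lam a) \<mu> - ?chi a \<mu> = 0"
    using polyfun_eq_0_of_mult_eq_0[OF _ polyfun_det_N_mu] by blast
  then show ?thesis by simp
qed

end
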